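(* Let $q$ be a prime power and $m\geq 2$. Let $\Phi(x)=\sum_{i=0}^{2m}c_ix^{q^i}\in\mathbb{F}_q[x]$ with $c_{2m}=1$, $c_i=-c_{2m-i}$ for $0\le i\le m$, and $c_m=0$. Let \[L(x)=\Phi(x)+t^qx^{q^{m+1}}-tx^{q^{m-1}}\in\mathbb{F}_q(t)[x],\] let $E$ be a splitting field of $L$ over $\mathbb{F}_q(t)$, $G$ its Galois group, and $V$ the space of roots of $L$ in $E$. Let $f\in\mathbb{F}_q[x]$ be the unique polynomial with $f(0)=0$ and $f^q-f=x^{q^m}\Phi(x)$. Then the function $Q:V\to E$ defined by \[Q(\alpha)=t\alpha^{q^m+q^{m-1}}+f(\alpha)\] takes values in $\mathbb{F}_q$ and is a nondegenerate $\mathbb{F}_q$-valued quadratic form on $V$ that is $G$-invariant.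
   Context: Such a polynomial $f$ exists and is unique (it is monic of degree $q^{m-1}(q^m+1)$). The roots of $L$ form a $2m$-dimensional $\mathbb{F}_q$-vector space $V$. A function $Q:V\to\mathbb{F}_q$ is a quadratic form if $Q(\lambda v)=\lambda^2Q(v)$ for $\lambda\in\mathbb{F}_q$ and $Q(u+w)=Q(u)+Q(w)+C(u,w)$ for a symmetric bilinear form $C$ (its polarization); $Q$ is nondegenerate if $C$ is nondegenerate. $G$-invariant means $Q(\sigma\alpha)=Q(\alpha)$ for all $\sigma\in G$, $\alpha\in V$. *)

theory Defs
  imports "HOL-Computational_Algebra.Polynomial_Factorial"
begin

definition field_hom :: "('a::field \<Rightarrow> 'b::field) \<Rightarrow> bool" where
  "field_hom h \<longleftrightarrow> h 1 = 1 \<and> (\<forall>x y. h (x + y) = h x + h y \<and> h (x * y) = h x * h y)"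

definition is_subfield :: "'a::field set \<Rightarrow> bool" where
  "is_subfield S \<longleftrightarrow> 0 \<in> S \<and> 1 \<in> S \<and>
     (\<forall>x\<in>S. \<forall>y\<in>S. x + y \<in> S \<and> x * y \<in> S) \<and>
     (\<forall>x\<in>S. - x \<in> S \<and> inverse x \<in> S)"

definition splits :: "'a::field poly \<Rightarrow> bool" where
  "splits p \<longleftrightarrow> (\<exists>rs. p = smult (lead_coeff p) (\<Prod>r\<leftarrow>rs. [:- r, 1:]))"

text \<open>E (the whole type 'e, via the embedding i of the base field) is a splitting
  field of p over the base field: p splits in E and E is generated over i(K) by the roots of p.\<close>
definition is_splitting_field :: "('k::field \<Rightarrow> 'e::field) \<Rightarrow> 'k poly \<Rightarrow> bool" where
  "is_splitting_field i p \<longleftrightarrow> field_hom i \<and> p \<noteq> 0 \<and> splits (map_poly i p) \<and>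
     (\<forall>S. is_subfield S \<and> range i \<subseteq> S \<and> {a. poly (map_poly i p) a = 0} \<subseteq> S \<longrightarrow> S = UNIV)"

definition galois_group :: "('k::field \<Rightarrow> 'e::field) \<Rightarrow> ('e \<Rightarrow> 'e) set" where
  "galois_group i = {\<sigma>. bij \<sigma> \<and> field_hom \<sigma> \<and> (\<forall>x. \<sigma> (i x) = i x)}"

definition bilinear_on :: "'v set \<Rightarrow> ('s \<Rightarrow> 'v \<Rightarrow> 'v::plus) \<Rightarrow> ('v \<Rightarrow> 'v \<Rightarrow> 's::comm_ring_1) \<Rightarrow> bool" where
  "bilinear_on V sc C \<longleftrightarrow>
     (\<forall>u\<in>V. \<forall>v\<in>V. \<forall>w\<in>V. C (u + v) w = C u w + C v w \<and> C w (u + v) = C w u + C w v) \<and>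
     (\<forall>a. \<forall>u\<in>V. \<forall>w\<in>V. C (sc a u) w = a * C u w \<and> C w (sc a u) = a * C w u)"

definition quadratic_form_on :: "'v set \<Rightarrow> ('s \<Rightarrow> 'v \<Rightarrow> 'v::plus) \<Rightarrow> ('v \<Rightarrow> 's::comm_ring_1) \<Rightarrow> bool" where
  "quadratic_form_on V sc Q \<longleftrightarrow>
     (\<forall>a. \<forall>v\<in>V. Q (sc a v) = a ^ 2 * Q v) \<and>
     (\<exists>C. bilinear_on V sc C \<and> (\<forall>u\<in>V. \<forall>w\<in>V. C u w = C w u) \<and>
          (\<forall>u\<in>V. \<forall>w\<in>V. Q (u + w) = Q u + Q w + C u w))"

text \<open>Nondegenerate: the polarization (which is uniquely determined by Q) is nondegenerate.\<close>
definition nondegenerate_quadratic_form_on :: "'v set \<Rightarrow> ('s \<Rightarrow> 'v \<Rightarrow> 'v::{plus,zero}) \<Rightarrow> ('v \<Rightarrow> 's::comm_ring_1) \<Rightarrow> bool" where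
  "nondegenerate_quadratic_form_on V sc Q \<longleftrightarrow>
     (\<exists>C. bilinear_on V sc C \<and> (\<forall>u\<in>V. \<forall>w\<in>V. C u w = C w u) \<and>
          (\<forall>u\<in>V. \<forall>w\<in>V. Q (u + w) = Q u + Q w + C u w) \<and>
          (\<forall>u\<in>V. (\<forall>w\<in>V. C u w = 0) \<longrightarrow> u = 0))"

end

theory Submission
  imports Defs
begin

(* The Frobenius map x -> x^q is additive on E, so L acts on E as an F_q-linear map, V is an
   F_q-space, and since L' = c_0 = -1 the polynomial L is separable and |V| = q^(2m).
   The defining equation of f gives Q(a)^q - Q(a) = a^(q^m) L(a), so Q is F_q-valued on V.
   Telescoping shows f = sum_{j=1..m} sum_{k=m-j..m-1} c_(m+j) x^(q^k + q^(k+j)), so Q is a sum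
   of terms x^(q^a + q^b) and its polarization B is F_q-bilinear.  For fixed u, B(u, -) is a
   polynomial of degree q^(2m-1) < |V| with leading coefficient u^(q^(m-1)), which gives
   nondegeneracy; G-invariance holds because Q has coefficients in F_q(t). *)

lemma field_hom_add: "field_hom h \<Longrightarrow> h (x + y) = h x + h y"
  by (simp add: field_hom_def)

lemma field_hom_mult: "field_hom h \<Longrightarrow> h (x * y) = h x * h y"
  by (simp add: field_hom_def)

lemma field_hom_1: "field_hom h \<Longrightarrow> h 1 = 1"
  by (simp add: field_hom_def)

lemma field_hom_0: "field_hom h \<Longrightarrow> h 0 = 0"
  using field_hom_add[of h 0 0] by (metis add_cancel_right_left)

lemma field_hom_uminus: "field_hom h \<Longrightarrow> h (- x) = - h x"
  using field_hom_add[of h x "- x"] by (simp add: field_hom_0 minus_unique)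

lemma field_hom_diff: "field_hom h \<Longrightarrow> h (x - y) = h x - h y"
  using field_hom_add[of h x "- y"] by (simp add: field_hom_uminus)

lemma field_hom_power: "field_hom h \<Longrightarrow> h (x ^ n) = h x ^ n"
  by (induction n) (simp_all add: field_hom_1 field_hom_mult)

lemma field_hom_of_nat: "field_hom h \<Longrightarrow> h (of_nat n) = of_nat n"
  by (induction n) (simp_all add: field_hom_0 field_hom_1 field_hom_add)

lemma field_hom_inj: "field_hom h \<Longrightarrow> inj h"
proof (rule injI)
  fix x y assume h: "field_hom h" and eq: "h x = h y"
  have "h (x - y) * h (inverse (x - y)) = 0"
    using eq by (simp add: field_hom_diff[OF h])
  then show "x = y"
    by (metis h field_hom_1 field_hom_mult right_inverse right_minus_eq zero_neq_one)
qed

lemma field_hom_CHAR: "field_hom (h :: 'a::field \<Rightarrow> 'b::field) \<Longrightarrow> CHAR('b) = CHAR('a)"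
  by (rule CHAR_eqI)
    (metis field_hom_of_nat field_hom_0 field_hom_inj injD of_nat_CHAR of_nat_eq_0_iff_char_dvd)+

lemma map_poly_field_hom_add:
  "field_hom h \<Longrightarrow> map_poly h (p + q) = map_poly h p + map_poly h q"
  by (intro poly_eqI) (simp add: coeff_map_poly field_hom_0 field_hom_add)

lemma map_poly_field_hom_diff:
  "field_hom h \<Longrightarrow> map_poly h (p - q) = map_poly h p - map_poly h q"
  by (intro poly_eqI) (simp add: coeff_map_poly field_hom_0 field_hom_diff)

lemma map_poly_field_hom_sum:
  "field_hom h \<Longrightarrow> map_poly h (sum g A) = (\<Sum>a\<in>A. map_poly h (g a))"
  by (induction A rule: infinite_finite_induct) (simp_all add: map_poly_field_hom_add)

lemma map_poly_field_hom_monom: "field_hom h \<Longrightarrow> map_poly h (monom c n) = monom (h c) n"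
  by (simp add: map_poly_monom field_hom_0)

lemma map_poly_field_hom_mult:
  "field_hom h \<Longrightarrow> map_poly h (p * q) = map_poly h p * map_poly h q"
  by (induction p rule: pCons_induct)
    (simp_all add: map_poly_field_hom_add map_poly_smult map_poly_pCons field_hom_0 field_hom_mult)

lemma map_poly_field_hom_power: "field_hom h \<Longrightarrow> map_poly h (p ^ n) = map_poly h p ^ n"
  by (induction n) (simp_all add: map_poly_field_hom_mult field_hom_1)

lemma field_hom_poly_commute:
  assumes "field_hom \<sigma>" and "\<And>n. \<sigma> (coeff p n) = coeff p n"
  shows "\<sigma> (poly p x) = poly p (\<sigma> x)"
  using assms(2)
proof (induction p rule: pCons_induct)
  case (pCons a p)
  have "\<sigma> a = a" "\<And>n. \<sigma> (coeff p n) = coeff p n"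
    using pCons.prems[of 0] pCons.prems[of "Suc _"] by simp_all
  with pCons.IH show ?case
    by (simp add: field_hom_add[OF assms(1)] field_hom_mult[OF assms(1)])
qed (simp add: field_hom_0[OF assms(1)])

lemma card_UNIV_field_ge_2: "card (UNIV :: 'k::{field,finite} set) \<ge> 2"
  using card_mono[of "UNIV :: 'k set" "{0, 1}"] by simp

lemma finite_field_power_card_same:
  fixes x :: "'k::{field,finite}"
  shows "x ^ card (UNIV :: 'k set) = x"
proof (cases "x = 0")
  case False
  define S where "S = (UNIV :: 'k set) - {0}"
  have "bij_betw (\<lambda>y. x * y) S S"
    using False unfolding S_def
    by (intro bij_betw_byWitness[of _ "\<lambda>y. y / x"]) auto
  then have "(\<Prod>y\<in>S. x * y) = (\<Prod>y\<in>S. y)"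
    by (rule prod.reindex_bij_betw)
  then have "x ^ card S = 1"
    by (simp add: prod.distrib S_def)
  moreover have "card (UNIV :: 'k set) = Suc (card S)"
    unfolding S_def by (simp add: card_Diff_singleton card_gt_0_iff)
  ultimately show ?thesis
    by simp
qed (simp add: finite_UNIV_card_ge_0)

lemma finite_field_power_card_power_same:
  fixes x :: "'k::{field,finite}"
  shows "x ^ (card (UNIV :: 'k set) ^ n) = x"
  by (induction n) (simp_all add: power_Suc2 power_mult finite_field_power_card_same)

text \<open>The polynomial \<open>(1 + X)\<^sup>q - X\<^sup>q - 1\<close> vanishes on all \<open>q\<close> elements of the field
  but has degree below \<open>q\<close>, so all its coefficients, the inner binomial coefficients, vanish.\<close>
lemma finite_field_binomial_card_eq_0:
  assumes "0 < i" "i < card (UNIV :: 'k::{field,finite} set)"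
  shows "(of_nat (card (UNIV :: 'k set) choose i) :: 'k) = 0"
proof -
  define q where "q = card (UNIV :: 'k set)"
  have "q \<ge> 2"
    unfolding q_def by (rule card_UNIV_field_ge_2)
  define R :: "'k poly" where "R = [:1, 1:] ^ q - monom 1 q - 1"
  have "R = 0"
  proof (rule ccontr)
    assume "R \<noteq> 0"
    have "degree R \<le> q - 1"
    proof (rule degree_le, intro allI impI)
      fix n assume "q - 1 < n"
      moreover have "coeff ([:1, 1::'k:] ^ q) n = 0" if "n > q"
        using that degree_power_le[of "[:1, 1::'k:]" q] by (intro coeff_eq_0) simp
      ultimately show "coeff R n = 0"
        using \<open>q \<ge> 2\<close> by (cases "n = q") (simp_all add: R_def coeff_linear_poly_power)
    qed
    moreover have "{x. poly R x = 0} = UNIV"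
      by (simp add: R_def poly_monom q_def finite_field_power_card_same)
    then have "q \<le> degree R"
      using card_poly_roots_bound[OF \<open>R \<noteq> 0\<close>] by (simp add: q_def)
    ultimately show False
      using \<open>q \<ge> 2\<close> by linarith
  qed
  then have "coeff R i = 0"
    by simp
  then show ?thesis
    using assms by (simp add: R_def q_def coeff_linear_poly_power)
qed

lemma add_power_card:
  fixes x y :: "'a::comm_ring_1"
  assumes "CHAR('a) = CHAR('k::{field,finite})"
  shows "(x + y) ^ card (UNIV :: 'k set) = x ^ card (UNIV :: 'k set) + y ^ card (UNIV :: 'k set)"
proof -
  define q where "q = card (UNIV :: 'k set)"
  have "q > 0"
    unfolding q_def by (simp add: finite_UNIV_card_ge_0)
  have "(of_nat (q choose i) :: 'a) = 0" if "0 < i" "i < q" for i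
    using finite_field_binomial_card_eq_0[where 'k = 'k, of i] that assms
    by (simp add: of_nat_eq_0_iff_char_dvd q_def)
  then have "(x + y) ^ q = (\<Sum>k\<le>q. (if k = 0 then y ^ q else 0) + (if k = q then x ^ q else 0))"
    using \<open>q > 0\<close> by (auto simp: binomial_ring intro!: sum.cong)
  also have "\<dots> = x ^ q + y ^ q"
    using \<open>q > 0\<close> by (simp add: sum.distrib)
  finally show ?thesis
    by (simp add: q_def)
qed

lemma add_power_card_power:
  fixes x y :: "'a::comm_ring_1"
  assumes "CHAR('a) = CHAR('k::{field,finite})"
  shows "(x + y) ^ (card (UNIV :: 'k set) ^ n)
    = x ^ (card (UNIV :: 'k set) ^ n) + y ^ (card (UNIV :: 'k set) ^ n)"
  by (induction n arbitrary: x y) (simp_all add: power_mult add_power_card[OF assms])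

lemma diff_power_card:
  fixes x y :: "'a::comm_ring_1"
  assumes "CHAR('a) = CHAR('k::{field,finite})"
  shows "(x - y) ^ card (UNIV :: 'k set) = x ^ card (UNIV :: 'k set) - y ^ card (UNIV :: 'k set)"
proof -
  have "(x - y) ^ card (UNIV :: 'k set) + y ^ card (UNIV :: 'k set) = x ^ card (UNIV :: 'k set)"
    using add_power_card[OF assms, of "x - y" y] by simp
  then show ?thesis
    by (simp add: eq_diff_eq)
qed

lemma sum_power_card:
  fixes g :: "'b \<Rightarrow> 'a::comm_ring_1"
  assumes "CHAR('a) = CHAR('k::{field,finite})"
  shows "(sum g A) ^ card (UNIV :: 'k set) = (\<Sum>a\<in>A. g a ^ card (UNIV :: 'k set))"
  by (induction A rule: infinite_finite_induct)
    (simp_all add: add_power_card[OF assms] finite_UNIV_card_ge_0 zero_power)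

lemma field_hom_range_finite_field:
  fixes \<kappa> :: "'k::{field,finite} \<Rightarrow> 'e::field"
  assumes hom: "field_hom \<kappa>" and fixed: "x ^ card (UNIV :: 'k set) = x"
  shows "x \<in> range \<kappa>"
proof (rule ccontr)
  assume "x \<notin> range \<kappa>"
  define q where "q = card (UNIV :: 'k set)"
  define R :: "'e poly" where "R = monom 1 q - [:0, 1:]"
  have "q \<ge> 2"
    unfolding q_def by (rule card_UNIV_field_ge_2)
  then have "coeff R q = 1"
    by (simp add: R_def coeff_pCons split: nat.split)
  then have "R \<noteq> 0"
    by auto
  have "degree R \<le> q"
    unfolding R_def using \<open>q \<ge> 2\<close> by (intro degree_diff_le) (auto simp: degree_monom_le)
  have "\<kappa> a ^ q = \<kappa> a" for a
    unfolding q_def by (metis hom field_hom_power finite_field_power_card_same)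
  then have "insert x (range \<kappa>) \<subseteq> {y. poly R y = 0}"
    using fixed by (auto simp: R_def poly_monom q_def)
  then have "card (insert x (range \<kappa>)) \<le> card {y. poly R y = 0}"
    by (intro card_mono poly_roots_finite \<open>R \<noteq> 0\<close>)
  also have "\<dots> \<le> degree R"
    by (rule card_poly_roots_bound[OF \<open>R \<noteq> 0\<close>])
  finally have "card (insert x (range \<kappa>)) \<le> q"
    using \<open>degree R \<le> q\<close> by simp
  moreover have "card (range \<kappa>) = q"
    using card_image[OF field_hom_inj[OF hom]] by (simp add: q_def)
  ultimately show False
    using \<open>x \<notin> range \<kappa>\<close> by simp
qed

lemma order_prod_list_linear:
  fixes a :: "'a::idom"
  shows "order a (\<Prod>r\<leftarrow>rs. [:- r, 1:]) = count (mset rs) a"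
proof (induction rs)
  case (Cons r rs)
  have "(\<Prod>r\<leftarrow>rs. [:- r, 1:]) \<noteq> 0"
    by (auto simp: prod_list_zero_iff)
  then have "order a ([:- r, 1:] * (\<Prod>r\<leftarrow>rs. [:- r, 1:]))
      = order a [:- r, 1:] + order a (\<Prod>r\<leftarrow>rs. [:- r, 1:])"
    by (intro order_mult) (simp only: mult_eq_0_iff pCons_eq_0_iff one_neq_zero, simp)
  moreover have "order a [:- r, 1:] = (if a = r then 1 else 0)"
    using order_power_n_n[of a 1] by (auto intro: order_0I)
  ultimately show ?case
    using Cons.IH by (simp del: mult_pCons_left)
qed simp

lemma order_le_1_if_poly_pderiv_neq_0:
  fixes p :: "'a::idom poly"
  assumes "poly (pderiv p) a \<noteq> 0"
  shows "order a p \<le> 1"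
proof (rule ccontr)
  assume "\<not> order a p \<le> 1"
  moreover have "p \<noteq> 0"
    using assms by auto
  ultimately have "[:- a, 1:] ^ 2 dvd p"
    by (simp add: order_divides)
  then obtain r where "p = [:- a, 1:] * ([:- a, 1:] * r)"
    by (metis dvdE power2_eq_square mult.assoc)
  then have "poly (pderiv p) a = 0"
    by (simp only: pderiv_mult poly_add poly_mult) simp
  with assms show False
    by contradiction
qed

lemma card_roots_splits_separable:
  fixes p :: "'a::field poly"
  assumes "splits p" and "p \<noteq> 0" and "\<And>x. poly p x = 0 \<Longrightarrow> poly (pderiv p) x \<noteq> 0"
  shows "card {x. poly p x = 0} = degree p"
proof -
  obtain rs where p: "p = smult (lead_coeff p) (\<Prod>r\<leftarrow>rs. [:- r, 1:])"
    using assms(1) unfolding splits_def by blast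
  have "lead_coeff p \<noteq> 0"
    using assms(2) by simp
  then have "count (mset rs) a = order a p" for a
    by (subst p) (simp add: order_smult order_prod_list_linear)
  moreover have "order a p \<le> 1" for a
    using assms(3) order_le_1_if_poly_pderiv_neq_0 order_0I by (metis zero_le_one)
  ultimately have "distinct rs"
    unfolding distinct_count_atmost_1 by (metis count_mset count_list_0_iff le_antisym less_one not_le)
  then have prod: "(\<Prod>r\<leftarrow>rs. [:- r, 1:]) = (\<Prod>r\<in>set rs. [:- r, 1:])"
    by (simp add: prod.distinct_set_conv_list)
  have "{x. poly p x = 0} = set rs"
    using \<open>lead_coeff p \<noteq> 0\<close> by (subst p) (auto simp: prod poly_prod)
  moreover have "degree p = card (set rs)"
    using \<open>lead_coeff p \<noteq> 0\<close> by (subst p) (simp add: prod degree_prod_sum_eq)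
  ultimately show ?thesis
    by simp
qed

lemma poly_power_eq_self_imp_eq_0:
  fixes g :: "'a::idom poly"
  assumes "g ^ n = g" and "n \<ge> 2" and "poly g 0 = 0"
  shows "g = 0"
proof (rule ccontr)
  assume "g \<noteq> 0"
  then have "degree g = 0"
    using assms(1,2) degree_power_eq[of g n] by simp
  then have "g = [:poly g 0:]"
    by (metis degree_0_id poly_0_coeff_0)
  with assms(3) \<open>g \<noteq> 0\<close> show False
    by simp
qed

lemma sum_atMost_double_split:
  fixes h :: "nat \<Rightarrow> 'a::comm_monoid_add"
  shows "(\<Sum>i\<le>2*m. h i) = h m + (\<Sum>j=1..m. h (m + j)) + (\<Sum>j=1..m. h (m - j))"
proof -
  have lower: "(\<Sum>j=1..m. h (m - j)) = (\<Sum>i<m. h i)"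
    by (rule sum.reindex_bij_witness[of _ "\<lambda>i. m - i" "\<lambda>j. m - j"]) auto
  have upper: "(\<Sum>j=1..m. h (m + j)) = (\<Sum>i\<in>{m<..2*m}. h i)"
    by (rule sum.reindex_bij_witness[of _ "\<lambda>i. i - m" "\<lambda>j. m + j"]) auto
  have "{..2*m} = {m} \<union> ({..<m} \<union> {m<..2*m})"
    by auto
  moreover have "sum h ({..<m} \<union> {m<..2*m}) = (\<Sum>i<m. h i) + (\<Sum>i\<in>{m<..2*m}. h i)"
    by (rule sum.union_disjoint) auto
  ultimately have "(\<Sum>i\<le>2*m. h i) = h m + ((\<Sum>i<m. h i) + (\<Sum>i\<in>{m<..2*m}. h i))"
    by simp
  then show ?thesis
    unfolding lower upper by (simp add: ac_simps)
qed

locale subfield_valued_quadratic_form =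
  fixes \<kappa> :: "'k::field \<Rightarrow> 'e::field" and V :: "'e set"
    and Q :: "'e \<Rightarrow> 'e" and B :: "'e \<Rightarrow> 'e \<Rightarrow> 'e"
  assumes hom: "field_hom \<kappa>"
    and add_closed: "\<And>u w. u \<in> V \<Longrightarrow> w \<in> V \<Longrightarrow> u + w \<in> V"
    and smult_closed: "\<And>a u. u \<in> V \<Longrightarrow> \<kappa> a * u \<in> V"
    and Q_in_range: "\<And>u. u \<in> V \<Longrightarrow> Q u \<in> range \<kappa>"
    and Q_smult: "\<And>a u. u \<in> V \<Longrightarrow> Q (\<kappa> a * u) = \<kappa> a ^ 2 * Q u"
    and Q_add: "\<And>u w. u \<in> V \<Longrightarrow> w \<in> V \<Longrightarrow> Q (u + w) = Q u + Q w + B u w"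
    and B_add: "\<And>u v w. u \<in> V \<Longrightarrow> v \<in> V \<Longrightarrow> w \<in> V \<Longrightarrow> B (u + v) w = B u w + B v w"
    and B_smult: "\<And>a u w. u \<in> V \<Longrightarrow> w \<in> V \<Longrightarrow> B (\<kappa> a * u) w = \<kappa> a * B u w"
    and B_sym: "\<And>u w. u \<in> V \<Longrightarrow> w \<in> V \<Longrightarrow> B u w = B w u"
begin

definition form :: "'e \<Rightarrow> 'k" where
  "form u = inv \<kappa> (Q u)"

definition polar :: "'e \<Rightarrow> 'e \<Rightarrow> 'k" where
  "polar u w = inv \<kappa> (B u w)"

lemma inv_hom_eqI: "x = \<kappa> a \<Longrightarrow> inv \<kappa> x = a"
  using field_hom_inj[OF hom] by simp

lemma hom_form: "u \<in> V \<Longrightarrow> \<kappa> (form u) = Q u"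
  unfolding form_def by (rule f_inv_into_f[OF Q_in_range])

lemma hom_polar:
  assumes "u \<in> V" and "w \<in> V"
  shows "\<kappa> (polar u w) = B u w"
proof -
  have "B u w = \<kappa> (form (u + w) - form u - form w)"
    using assms by (simp add: field_hom_diff[OF hom] hom_form add_closed Q_add)
  then show ?thesis
    unfolding polar_def by (simp add: inv_hom_eqI)
qed

lemma form_eqI: "Q u = \<kappa> a \<Longrightarrow> form u = a"
  unfolding form_def by (rule inv_hom_eqI)

lemma polar_eqI: "B u w = \<kappa> a \<Longrightarrow> polar u w = a"
  unfolding polar_def by (rule inv_hom_eqI)

lemma polar_sym: "u \<in> V \<Longrightarrow> w \<in> V \<Longrightarrow> polar u w = polar w u"
  unfolding polar_def by (simp add: B_sym)

lemma polar_add_left: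
  "u \<in> V \<Longrightarrow> v \<in> V \<Longrightarrow> w \<in> V \<Longrightarrow> polar (u + v) w = polar u w + polar v w"
  by (intro polar_eqI add_closed) (simp_all add: B_add hom_polar field_hom_add[OF hom])

lemma polar_smult_left: "u \<in> V \<Longrightarrow> w \<in> V \<Longrightarrow> polar (\<kappa> a * u) w = a * polar u w"
  by (intro polar_eqI smult_closed) (simp_all add: B_smult hom_polar field_hom_mult[OF hom])

lemma polar_bilinear: "bilinear_on V (\<lambda>a v. \<kappa> a * v) polar"
  unfolding bilinear_on_def
proof (intro conjI ballI allI)
  fix u v w assume "u \<in> V" "v \<in> V" "w \<in> V"
  then show "polar (u + v) w = polar u w + polar v w" "polar w (u + v) = polar w u + polar w v"
    by (metis polar_add_left polar_sym add_closed)+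
next
  fix a u w assume "u \<in> V" "w \<in> V"
  then show "polar (\<kappa> a * u) w = a * polar u w" "polar w (\<kappa> a * u) = a * polar w u"
    by (metis polar_smult_left polar_sym smult_closed)+
qed

lemma form_add: "u \<in> V \<Longrightarrow> w \<in> V \<Longrightarrow> form (u + w) = form u + form w + polar u w"
  by (intro form_eqI add_closed)
    (simp_all add: Q_add hom_form hom_polar field_hom_add[OF hom])

lemma quadratic_form: "quadratic_form_on V (\<lambda>a v. \<kappa> a * v) form"
  unfolding quadratic_form_on_def
  by (auto intro!: exI[of _ polar] form_eqI smult_closed polar_bilinear
      simp: Q_smult hom_form polar_sym form_add field_hom_mult[OF hom] field_hom_power[OF hom])

lemma nondegenerate_form:
  assumes "\<And>u. u \<in> V \<Longrightarrow> \<forall>w\<in>V. B u w = 0 \<Longrightarrow> u = 0"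
  shows "nondegenerate_quadratic_form_on V (\<lambda>a v. \<kappa> a * v) form"
  unfolding nondegenerate_quadratic_form_on_def
  using assms by (auto intro!: exI[of _ polar] polar_bilinear
      simp: polar_sym form_add simp flip: hom_polar field_hom_0[OF hom])

end

locale orthogonal_additive_polynomial =
  fixes c :: "nat \<Rightarrow> 'k::{field,finite}" and m :: nat
    and \<iota> :: "'k poly fract \<Rightarrow> 'e::field" and f :: "'k poly"
    and q :: nat and \<Phi> :: "'k poly" and t :: "'k poly fract" and L :: "'k poly fract poly"
    and V :: "'e set" and \<kappa> :: "'k \<Rightarrow> 'e" and Q :: "'e \<Rightarrow> 'e"
  assumes q_def: "q = card (UNIV :: 'k set)"
    and \<Phi>_def: "\<Phi> = (\<Sum>i\<le>2*m. monom (c i) (q ^ i))"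
    and L_def: "L = (\<Sum>i\<le>2*m. monom (to_fract [:c i:]) (q ^ i))
                + monom (t ^ q) (q ^ (m + 1)) - monom t (q ^ (m - 1))"
    and V_def: "V = {\<alpha>. poly (map_poly \<iota> L) \<alpha> = 0}"
    and \<kappa>_def: "\<kappa> = (\<lambda>a. \<iota> (to_fract [:a:]))"
    and Q_def: "Q = (\<lambda>\<alpha>. \<iota> t * \<alpha> ^ (q ^ m + q ^ (m - 1)) + poly (map_poly \<kappa> f) \<alpha>)"
    and m_ge_2: "m \<ge> 2"
    and c_top: "c (2*m) = 1"
    and c_anti: "\<forall>i\<le>m. c i = - c (2*m - i)"
    and c_mid: "c m = 0"
    and f_0: "poly f 0 = 0"
    and f_eq: "f ^ q - f = monom 1 (q ^ m) * \<Phi>"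
    and splitting_field: "is_splitting_field \<iota> L"
begin

abbreviation T :: 'e where "T \<equiv> \<iota> t"
abbreviation P :: "'e poly" where "P \<equiv> map_poly \<iota> L"

lemma q_gt_1: "q > 1"
  using card_UNIV_field_ge_2[where 'k = 'k] by (simp add: q_def)

lemma field_hom_\<iota>: "field_hom \<iota>"
  using splitting_field by (simp add: is_splitting_field_def)

lemma field_hom_\<kappa>: "field_hom \<kappa>"
proof -
  have "[:x + y:] = [:x:] + [:y:]" "[:x * y:] = [:x:] * [:y:]" for x y :: 'k
    by simp_all
  then show ?thesis
    using field_hom_\<iota> unfolding \<kappa>_def field_hom_def
    by (simp only: one_pCons[symmetric] to_fract_add to_fract_mult to_fract_1) simp
qed

lemma CHAR_eq: "CHAR('e) = CHAR('k)"
  by (rule field_hom_CHAR[OF field_hom_\<kappa>])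

lemma of_nat_q: "(of_nat q :: 'e) = 0"
  using finite_field_binomial_card_eq_0[where 'k = 'k, of 1] q_gt_1
  by (simp add: of_nat_eq_0_iff_char_dvd CHAR_eq q_def)

lemma add_power_q_power: "(x + y :: 'e) ^ (q ^ n) = x ^ (q ^ n) + y ^ (q ^ n)"
  unfolding q_def by (rule add_power_card_power[OF CHAR_eq])

lemma \<kappa>_power_q_power: "\<kappa> a ^ (q ^ n) = \<kappa> a"
  by (simp add: q_def finite_field_power_card_power_same flip: field_hom_power[OF field_hom_\<kappa>])

lemma P_expand:
  "P = (\<Sum>i\<le>2*m. monom (\<kappa> (c i)) (q ^ i)) + monom (T ^ q) (q ^ (m + 1)) - monom T (q ^ (m - 1))"
  using field_hom_\<iota> by (simp add: L_def \<kappa>_def map_poly_field_hom_add map_poly_field_hom_diff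
      map_poly_field_hom_sum map_poly_field_hom_monom field_hom_power)

lemma poly_P:
  "poly P x = (\<Sum>i\<le>2*m. \<kappa> (c i) * x ^ (q ^ i)) + T ^ q * x ^ (q ^ (m + 1)) - T * x ^ (q ^ (m - 1))"
  by (simp add: P_expand poly_sum poly_monom)

lemma poly_P_add: "poly P (x + y) = poly P x + poly P y"
  by (simp add: poly_P add_power_q_power algebra_simps sum.distrib del: power_Suc)

lemma poly_P_smult: "poly P (\<kappa> a * x) = \<kappa> a * poly P x"
  by (simp add: poly_P power_mult_distrib \<kappa>_power_q_power algebra_simps sum_distrib_left del: power_Suc)

lemma V_add_closed: "x \<in> V \<Longrightarrow> y \<in> V \<Longrightarrow> x + y \<in> V"
  by (simp add: V_def poly_P_add)

lemma V_smult_closed: "x \<in> V \<Longrightarrow> \<kappa> a * x \<in> V"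
  by (simp add: V_def poly_P_smult)

lemma degree_P: "degree P = q ^ (2*m)" and lead_coeff_P: "lead_coeff P = 1"
proof -
  define R where "R = (\<Sum>i<2*m. monom (\<kappa> (c i)) (q ^ i))
    + monom (T ^ q) (q ^ (m + 1)) - monom T (q ^ (m - 1))"
  have "P = R + monom 1 (q ^ (2*m))"
    using c_top field_hom_1[OF field_hom_\<kappa>]
    by (simp add: P_expand R_def lessThan_Suc_atMost[symmetric] del: power_Suc)
  moreover have "degree R < q ^ (2*m)"
  proof -
    have "q ^ i \<le> q ^ (2*m - 1)" if "i \<le> 2*m - 1" for i
      using that q_gt_1 by (intro power_increasing) auto
    then have "degree R \<le> q ^ (2*m - 1)"
      unfolding R_def using m_ge_2
      by (intro degree_add_le degree_diff_le degree_sum_le order.trans[OF degree_monom_le])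
        (auto simp del: power_Suc)
    also have "\<dots> < q ^ (2*m)"
      using q_gt_1 m_ge_2 by (intro power_strict_increasing) auto
    finally show ?thesis .
  qed
  ultimately show "degree P = q ^ (2*m)" "lead_coeff P = 1"
    by (simp_all add: degree_add_eq_right degree_monom_eq coeff_eq_0)
qed

lemma pderiv_P: "pderiv P = -1"
proof -
  have "pderiv (monom a (q ^ i)) = (if i = 0 then [:a:] else 0)" for a :: 'e and i
    by (auto simp: pderiv_monom of_nat_q monom_0)
  then have "pderiv P = (\<Sum>i\<le>2*m. if i = 0 then [:\<kappa> (c i):] else 0)"
    using m_ge_2 by (simp add: P_expand pderiv_add pderiv_diff higher_pderiv_sum[where n = 1, simplified]
        del: power_Suc)
  also have "\<dots> = [:\<kappa> (c 0):]"
    by simp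
  also have "\<kappa> (c 0) = -1"
    using c_anti c_top field_hom_uminus[OF field_hom_\<kappa>] field_hom_1[OF field_hom_\<kappa>] by simp
  finally show ?thesis
    by (simp add: one_pCons)
qed

lemma card_V: "card V = q ^ (2*m)"
proof -
  have "splits P"
    using splitting_field by (simp add: is_splitting_field_def)
  moreover have "P \<noteq> 0"
    using lead_coeff_P by auto
  ultimately show ?thesis
    by (simp add: V_def card_roots_splits_separable pderiv_P degree_P)
qed

definition f_closed_form :: "'k poly" where
  "f_closed_form = (\<Sum>j=1..m. \<Sum>k\<in>{m-j..<m}. monom (c (m + j)) (q ^ k + q ^ (k + j)))"

lemma f_closed_form_solves: "f_closed_form ^ q - f_closed_form = monom 1 (q ^ m) * \<Phi>"
proof -
  define g where "g j k = monom (c (m + j)) (q ^ k + q ^ (k + j))" for j k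
  have g_power: "g j k ^ q = g j (Suc k)" for j k
    by (simp add: g_def monom_power q_def finite_field_power_card_same algebra_simps del: power_Suc)
      (simp add: power_Suc2 mult.commute q_def)
  have f_g: "f_closed_form = (\<Sum>j=1..m. \<Sum>k\<in>{m-j..<m}. g j k)"
    by (simp add: f_closed_form_def g_def)
  then have "f_closed_form ^ q = (\<Sum>j=1..m. \<Sum>k\<in>{m-j..<m}. g j k ^ q)"
    by (simp add: q_def sum_power_card)
  then have "f_closed_form ^ q - f_closed_form = (\<Sum>j=1..m. \<Sum>k\<in>{m-j..<m}. g j (Suc k) - g j k)"
    by (simp add: g_power f_g sum_subtractf)
  also have "\<dots> = (\<Sum>j=1..m. g j m - g j (m - j))"
    by (intro sum.cong refl sum_Suc_diff') auto
  also have "\<dots> = monom 1 (q ^ m) * \<Phi>"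
  proof -
    have "monom (c (m - j)) (q ^ m + q ^ (m - j)) = - g j (m - j)" if "j \<in> {1..m}" for j
    proof -
      have "c (m - j) = - c (m + j)"
        using c_anti that by (simp add: Suc_leI le_add_diff_inverse2)
      moreover have "m - j + j = m"
        using that by auto
      ultimately show ?thesis
        by (simp add: g_def minus_monom add.commute)
    qed
    moreover have "monom 1 (q ^ m) * \<Phi> = (\<Sum>i\<le>2*m. monom (c i) (q ^ m + q ^ i))"
      by (simp add: \<Phi>_def sum_distrib_left mult_monom)
    ultimately show ?thesis
      using c_mid by (simp add: sum_atMost_double_split g_def sum_subtractf sum_negf)
  qed
  finally show ?thesis .
qed

lemma f_eq_closed_form: "f = f_closed_form"
proof -
  have CHAR_poly: "CHAR('k poly) = CHAR('k)"
    by simp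
  have "(f - f_closed_form) ^ q = f ^ q - f_closed_form ^ q"
    unfolding q_def by (rule diff_power_card[OF CHAR_poly])
  also have "\<dots> = f - f_closed_form"
    using f_eq f_closed_form_solves by (simp add: algebra_simps)
  finally have "(f - f_closed_form) ^ q = f - f_closed_form" .
  moreover have "poly f_closed_form 0 = 0"
    using q_gt_1 by (simp add: f_closed_form_def poly_sum poly_monom power_0_left)
  ultimately show ?thesis
    using poly_power_eq_self_imp_eq_0[of "f - f_closed_form" q] q_gt_1 f_0 by simp
qed

lemma Q_closed_form: "Q x = T * (x ^ q ^ m * x ^ q ^ (m - 1))
    + (\<Sum>j=1..m. \<Sum>k\<in>{m-j..<m}. \<kappa> (c (m + j)) * (x ^ q ^ k * x ^ q ^ (k + j)))"
  using field_hom_\<kappa>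
  by (simp add: Q_def f_eq_closed_form f_closed_form_def map_poly_field_hom_sum
      map_poly_field_hom_monom poly_sum poly_monom power_add)

lemma Q_power_q: "Q x ^ q = Q x + x ^ q ^ m * poly P x"
proof -
  let ?F = "poly (map_poly \<kappa> f) x"
  have "f ^ q = f + monom 1 (q ^ m) * \<Phi>"
    using f_eq by (simp add: algebra_simps)
  then have "poly (map_poly \<kappa> (f ^ q)) x = poly (map_poly \<kappa> f + monom 1 (q ^ m) * map_poly \<kappa> \<Phi>) x"
    using field_hom_\<kappa>
    by (simp add: map_poly_field_hom_add map_poly_field_hom_mult map_poly_field_hom_monom field_hom_1)
  then have F: "?F ^ q = ?F + x ^ q ^ m * (\<Sum>i\<le>2*m. \<kappa> (c i) * x ^ q ^ i)"
    using field_hom_\<kappa>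
    by (simp add: map_poly_field_hom_power \<Phi>_def map_poly_field_hom_sum map_poly_field_hom_monom
        poly_sum poly_monom)
  have "q ^ (m - 1) * q = q ^ m"
    using m_ge_2 by (cases m) (simp_all add: mult.commute)
  then have "(q ^ m + q ^ (m - 1)) * q = q ^ (m + 1) + q ^ m"
    by (simp add: distrib_left mult.commute)
  then have exponent: "(x ^ (q ^ m + q ^ (m - 1))) ^ q = x ^ q ^ (m + 1) * x ^ q ^ m"
    by (simp flip: power_mult power_add del: power_Suc)
  have "Q x ^ q = T ^ q * (x ^ (q ^ m + q ^ (m - 1))) ^ q + ?F ^ q"
    using add_power_q_power[of _ _ 1] by (simp add: Q_def power_mult_distrib)
  also have "\<dots> = Q x + x ^ q ^ m * poly P x"
    unfolding exponent F by (simp add: Q_def poly_P power_add algebra_simps del: power_Suc)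
  finally show ?thesis .
qed

lemma Q_in_range: "x \<in> V \<Longrightarrow> Q x \<in> range \<kappa>"
  by (rule field_hom_range_finite_field[OF field_hom_\<kappa>]) (simp add: Q_power_q V_def flip: q_def)

definition B :: "'e \<Rightarrow> 'e \<Rightarrow> 'e" where
  "B u w = T * (u ^ q ^ m * w ^ q ^ (m - 1) + w ^ q ^ m * u ^ q ^ (m - 1))
    + (\<Sum>j=1..m. \<Sum>k\<in>{m-j..<m}.
         \<kappa> (c (m + j)) * (u ^ q ^ k * w ^ q ^ (k + j) + w ^ q ^ k * u ^ q ^ (k + j)))"

lemma Q_add: "Q (u + w) = Q u + Q w + B u w"
  by (simp add: Q_closed_form B_def add_power_q_power algebra_simps flip: sum.distrib)

lemma Q_smult: "Q (\<kappa> a * u) = \<kappa> a ^ 2 * Q u"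
  by (simp add: Q_closed_form power_mult_distrib \<kappa>_power_q_power sum_distrib_left
      algebra_simps power2_eq_square)

lemma B_add: "B (u + v) w = B u w + B v w"
  by (simp add: B_def add_power_q_power algebra_simps flip: sum.distrib)

lemma B_smult: "B (\<kappa> a * u) w = \<kappa> a * B u w"
  by (simp add: B_def power_mult_distrib \<kappa>_power_q_power sum_distrib_left algebra_simps)

lemma B_sym: "B u w = B w u"
  by (simp add: B_def algebra_simps)

definition B_poly :: "'e \<Rightarrow> 'e poly" where
  "B_poly u = monom (T * u ^ q ^ m) (q ^ (m - 1)) + monom (T * u ^ q ^ (m - 1)) (q ^ m)
    + (\<Sum>j=1..m. \<Sum>k\<in>{m-j..<m}. monom (\<kappa> (c (m + j)) * u ^ q ^ k) (q ^ (k + j))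
                                 + monom (\<kappa> (c (m + j)) * u ^ q ^ (k + j)) (q ^ k))"

lemma poly_B_poly: "poly (B_poly u) w = B u w"
  by (simp add: B_poly_def B_def poly_sum poly_monom algebra_simps)

lemma degree_B_poly: "degree (B_poly u) \<le> q ^ (2*m - 1)"
proof -
  have "degree (monom a (q ^ i)) \<le> q ^ (2*m - 1)" if "i \<le> 2*m - 1" for a :: 'e and i
    using that q_gt_1 by (intro order.trans[OF degree_monom_le] power_increasing) auto
  then show ?thesis
    unfolding B_poly_def using m_ge_2
    by (intro degree_add_le degree_sum_le) auto
qed

lemma coeff_B_poly_top: "coeff (B_poly u) (q ^ (2*m - 1)) = u ^ q ^ (m - 1)"
proof -
  let ?N = "q ^ (2*m - 1)"
  let ?top = "\<lambda>j k. if j = m \<and> k = m - 1 then u ^ q ^ (m - 1) else 0"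
  have "\<kappa> (c (m + m)) = 1"
    using c_top field_hom_1[OF field_hom_\<kappa>] by (simp add: mult_2)
  then have top_term: "coeff (monom (\<kappa> (c (m + j)) * u ^ q ^ k) (q ^ (k + j))
            + monom (\<kappa> (c (m + j)) * u ^ q ^ (k + j)) (q ^ k)) ?N = ?top j k"
    if "j \<in> {1..m}" "k \<in> {m-j..<m}" for j k
  proof -
    have "(q ^ (k + j) = ?N) = (j = m \<and> k = m - 1)" "(q ^ k = ?N) = False"
      using that m_ge_2 q_gt_1 by auto
    then show ?thesis
      using \<open>\<kappa> (c (m + m)) = 1\<close> by (simp only: coeff_add coeff_monom if_False add_0_right) auto
  qed
  have "(\<Sum>k\<in>{m-j..<m}. ?top j k) = (if j = m then u ^ q ^ (m - 1) else 0)" for j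
    using m_ge_2 by (cases "j = m") simp_all
  then have "(\<Sum>j=1..m. \<Sum>k\<in>{m-j..<m}. ?top j k) = u ^ q ^ (m - 1)"
    using m_ge_2 by simp
  moreover have "q ^ (m - 1) \<noteq> ?N" "q ^ m \<noteq> ?N"
    using m_ge_2 q_gt_1 by auto
  ultimately show ?thesis
    unfolding B_poly_def coeff_add coeff_sum using top_term by (simp add: coeff_monom)
qed

lemma B_nondegenerate:
  assumes "\<forall>w\<in>V. B u w = 0"
  shows "u = 0"
proof -
  have "B_poly u = 0"
  proof (rule ccontr)
    assume "B_poly u \<noteq> 0"
    have "V \<subseteq> {w. poly (B_poly u) w = 0}"
      using assms by (auto simp: poly_B_poly)
    then have "card V \<le> card {w. poly (B_poly u) w = 0}"
      by (intro card_mono poly_roots_finite \<open>B_poly u \<noteq> 0\<close>)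
    also have "\<dots> \<le> q ^ (2*m - 1)"
      using card_poly_roots_bound[OF \<open>B_poly u \<noteq> 0\<close>] degree_B_poly by (rule order.trans)
    also have "\<dots> < q ^ (2*m)"
      using q_gt_1 m_ge_2 by (intro power_strict_increasing) auto
    finally show False
      by (simp add: card_V)
  qed
  then have "u ^ q ^ (m - 1) = 0"
    using coeff_B_poly_top[of u] by simp
  then show "u = 0"
    by simp
qed

lemma Q_galois:
  assumes "\<sigma> \<in> galois_group \<iota>"
  shows "\<sigma> (Q x) = Q (\<sigma> x)"
proof -
  have hom: "field_hom \<sigma>" and fixed: "\<And>y. \<sigma> (\<iota> y) = \<iota> y"
    using assms by (auto simp: galois_group_def)
  have "\<sigma> (poly (map_poly \<kappa> f) x) = poly (map_poly \<kappa> f) (\<sigma> x)"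
    using fixed field_hom_0[OF field_hom_\<kappa>]
    by (intro field_hom_poly_commute[OF hom]) (simp add: coeff_map_poly \<kappa>_def)
  then show ?thesis
    by (simp add: Q_def fixed field_hom_add[OF hom] field_hom_mult[OF hom] field_hom_power[OF hom])
qed

end

theorem theorem4p8:
  fixes c :: "nat \<Rightarrow> 'k::{field,finite}"
    and m :: nat
    and \<iota> :: "'k poly fract \<Rightarrow> 'e::field"
    and f :: "'k poly"
  defines "q \<equiv> card (UNIV :: 'k set)"
  defines "\<Phi> \<equiv> (\<Sum>i\<le>2*m. monom (c i) (q ^ i))"
  defines "t \<equiv> to_fract [:0, 1:] :: 'k poly fract"
  defines "L \<equiv> (\<Sum>i\<le>2*m. monom (to_fract [:c i:]) (q ^ i))
                + monom (t ^ q) (q ^ (m + 1)) - monom t (q ^ (m - 1))"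
  defines "V \<equiv> {\<alpha>::'e. poly (map_poly \<iota> L) \<alpha> = 0}"
  defines "\<kappa> \<equiv> (\<lambda>a::'k. \<iota> (to_fract [:a:]))"
  defines "Q \<equiv> (\<lambda>\<alpha>::'e. \<iota> t * \<alpha> ^ (q ^ m + q ^ (m - 1)) + poly (map_poly \<kappa> f) \<alpha>)"
  assumes m2: "m \<ge> 2"
    and c_top: "c (2*m) = 1"
    and c_anti: "\<forall>i\<le>m. c i = - c (2*m - i)"
    and c_mid: "c m = 0"
    and f0: "poly f 0 = 0"
    and f_eq: "f ^ q - f = monom 1 (q ^ m) * \<Phi>"
    and split: "is_splitting_field \<iota> L"
  shows "\<exists>Qk :: 'e \<Rightarrow> 'k.
           (\<forall>\<alpha>\<in>V. Q \<alpha> = \<kappa> (Qk \<alpha>)) \<and>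
           quadratic_form_on V (\<lambda>a v. \<kappa> a * v) Qk \<and>
           nondegenerate_quadratic_form_on V (\<lambda>a v. \<kappa> a * v) Qk \<and>
           (\<forall>\<sigma>\<in>galois_group \<iota>. \<forall>\<alpha>\<in>V. Qk (\<sigma> \<alpha>) = Qk \<alpha>)"
proof -
  interpret orthogonal_additive_polynomial c m \<iota> f q \<Phi> t L V \<kappa> Q
    by unfold_locales
      (fact assms | simp only: q_def \<Phi>_def L_def V_def \<kappa>_def Q_def; fail)+
  interpret subfield_valued_quadratic_form \<kappa> V Q B
    by unfold_locales
      (simp_all add: field_hom_\<kappa> V_add_closed V_smult_closed Q_in_range Q_smult Q_add B_add B_smult,
       rule B_sym)
  show ?thesis
  proof (intro exI[of _ form] conjI ballI)
    show "Q \<alpha> = \<kappa> (form \<alpha>)" if "\<alpha> \<in> V" for \<alpha>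
      using hom_form[OF that] by simp
    show "quadratic_form_on V (\<lambda>a v. \<kappa> a * v) form"
      by (rule quadratic_form)
    show "nondegenerate_quadratic_form_on V (\<lambda>a v. \<kappa> a * v) form"
      using B_nondegenerate by (intro nondegenerate_form)
    show "form (\<sigma> \<alpha>) = form \<alpha>" if "\<sigma> \<in> galois_group \<iota>" "\<alpha> \<in> V" for \<sigma> \<alpha>
    proof (rule form_eqI)
      have "Q (\<sigma> \<alpha>) = \<sigma> (\<kappa> (form \<alpha>))"
        using that by (simp add: Q_galois hom_form)
      then show "Q (\<sigma> \<alpha>) = \<kappa> (form \<alpha>)"
        using that(1) by (simp add: galois_group_def \<kappa>_def)
    qed
  qed
qed

end
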